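(* With notation as in the context (type $E_7$), $\Gamma_7^+$ is exactly the set of $abc\in V$ such that exactly one of $a=0$, $b=0$, $c=0$ holds.
   Context: Let $F=\{0,1,2,3\}$ be the group $\mathbb{Z}/2\times\mathbb{Z}/2$ with operation $\oplus$ (binary addition without carry) and symplectic form $(a|a')=0$ if $a=0$, $a'=0$ or $a=a'$, and $1$ otherwise. Let $V=F^3$ (elements written $abc$), with coordinatewise $\oplus$ and form $(abc|a'b'c')=(a|a')+(b|b')+(c|c')\in\mathbb{Z}/2$. Let $\Delta$ be the $E_7$ root system with simple roots $\alpha_1,\dots,\alpha_7$, $\langle\alpha_i,\alpha_i\rangle=2$, $\langle\alpha_i,\alpha_j\rangle=-1$ for $\{i,j\}\in\{\{1,3\},\{3,4\},\{4,5\},\{5,6\},\{6,7\},\{2,4\}\}$, $0$ otherwise; $\Lambda=\bigoplus\mathbb{Z}\alpha_i$, $\Delta^+$ the positive roots. Let $f:\Lambda\to V$ be the homomorphism with $f(\alpha_1)=100$, $f(\alpha_2)=030$, $f(\alpha_3)=300$, $f(\alpha_4)=111$, $f(\alpha_5)=003$, $f(\alpha_6)=001$, $f(\alpha_7)=033$. Let $\Delta_7^+$ be the set of positive roots $\beta=\sum\beta^i\alpha_i$ with $\beta^7\neq0$, and $\Gamma_7^+=f(\Delta_7^+)$. *)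

theory Defs
  imports Main
begin

text \<open>The group F = Z/2 x Z/2 is modelled as the naturals {0,1,2,3} with
  bitwise exclusive or (binary addition without carry).\<close>

type_synonym vecV = "nat \<times> nat \<times> nat"

definition Fset :: "nat set" where "Fset = {0,1,2,3}"

definition Vset :: "vecV set" where "Vset = Fset \<times> Fset \<times> Fset"

definition vadd :: "vecV \<Rightarrow> vecV \<Rightarrow> vecV" where
  "vadd x y = (xor (fst x) (fst y), xor (fst (snd x)) (fst (snd y)), xor (snd (snd x)) (snd (snd y)))"

text \<open>Integer multiples in V (an elementary abelian 2-group): n.x = x if n odd, 0 otherwise.\<close>
definition vscale :: "int \<Rightarrow> vecV \<Rightarrow> vecV" where
  "vscale n x = (if odd n then x else (0,0,0))"

text \<open>Elements of the root lattice Lambda: coefficient functions beta with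
  beta = sum_{i=1..7} beta i * alpha_i; coefficients outside {1..7} are zero.\<close>
definition lattice :: "(nat \<Rightarrow> int) set" where
  "lattice = {\<beta>. \<forall>i. i \<notin> {1..7} \<longrightarrow> \<beta> i = 0}"

definition E7edge :: "nat \<Rightarrow> nat \<Rightarrow> bool" where
  "E7edge i j = ({i,j} \<in> {{1,3},{3,4},{4,5},{5,6},{6,7},{2,4}})"

definition gram :: "nat \<Rightarrow> nat \<Rightarrow> int" where
  "gram i j = (if i = j then 2 else if E7edge i j then -1 else 0)"

definition form :: "(nat \<Rightarrow> int) \<Rightarrow> (nat \<Rightarrow> int) \<Rightarrow> int" where
  "form \<beta> \<gamma> = (\<Sum>i\<in>{1..7}. \<Sum>j\<in>{1..7}. \<beta> i * \<gamma> j * gram i j)"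

text \<open>The E7 root system: the vectors of squared length 2 in the root lattice
  (E7 is simply laced); positive roots: those with all coefficients nonnegative.\<close>
definition E7roots :: "(nat \<Rightarrow> int) set" where
  "E7roots = {\<beta> \<in> lattice. form \<beta> \<beta> = 2}"

definition E7pos :: "(nat \<Rightarrow> int) set" where
  "E7pos = {\<beta> \<in> E7roots. \<forall>i. \<beta> i \<ge> 0}"

definition Delta7pos :: "(nat \<Rightarrow> int) set" where
  "Delta7pos = {\<beta> \<in> E7pos. \<beta> 7 \<noteq> 0}"

definition fsimple :: "nat \<Rightarrow> vecV" where
  "fsimple i = (if i = 1 then (1,0,0) else if i = 2 then (0,3,0)
     else if i = 3 then (3,0,0) else if i = 4 then (1,1,1)
     else if i = 5 then (0,0,3) else if i = 6 then (0,0,1)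
     else if i = 7 then (0,3,3) else (0,0,0))"

definition fhom :: "(nat \<Rightarrow> int) \<Rightarrow> vecV" where
  "fhom \<beta> = foldr (\<lambda>i acc. vadd (vscale (\<beta> i) (fsimple i)) acc) [1..<8] (0,0,0)"

definition Gamma7pos :: "vecV set" where
  "Gamma7pos = fhom ` Delta7pos"

end

theory Submission
  imports Defs
begin

text \<open>The E7 form is positive definite, so completing squares bounds every coefficient of a
  root; with these bounds the positive roots involving \<open>\<alpha>\<^sub>7\<close> are found by a finite
  search: there are 27 of them.  Their images under \<open>f\<close> are 27 distinct vectors, which are
  exactly the vectors of \<open>V\<close> with precisely one zero coordinate.\<close>

definition e7_norm :: "int \<Rightarrow> int \<Rightarrow> int \<Rightarrow> int \<Rightarrow> int \<Rightarrow> int \<Rightarrow> int \<Rightarrow> int" where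
  "e7_norm x1 x2 x3 x4 x5 x6 x7 =
     2*x1\<^sup>2 + 2*x2\<^sup>2 + 2*x3\<^sup>2 + 2*x4\<^sup>2 + 2*x5\<^sup>2 + 2*x6\<^sup>2 + 2*x7\<^sup>2
     - 2*x1*x3 - 2*x3*x4 - 2*x4*x5 - 2*x5*x6 - 2*x6*x7 - 2*x2*x4"

lemma form_diag_eq_e7_norm: "form \<beta> \<beta> = e7_norm (\<beta> 1) (\<beta> 2) (\<beta> 3) (\<beta> 4) (\<beta> 5) (\<beta> 6) (\<beta> 7)"
proof -
  have "{1..7::nat} = {1,2,3,4,5,6,7}" by auto
  then show ?thesis
    unfolding form_def gram_def E7edge_def e7_norm_def
    by (simp add: doubleton_eq_iff power2_eq_square algebra_simps)
qed

lemma less_of_square_certificate: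
  fixes x b d s t :: "'a::linordered_idom"
  assumes "t = s + d * x\<^sup>2" and "0 \<le> s" and "t < d * b\<^sup>2" and "0 < d" and "0 \<le> b"
  shows "x < b"
proof -
  have "d * x\<^sup>2 < d * b\<^sup>2" using assms(1-3) by simp
  then have "x\<^sup>2 < b\<^sup>2" using \<open>0 < d\<close> by simp
  then show ?thesis using \<open>0 \<le> b\<close> by (rule power_less_imp_less_base)
qed

text \<open>Each certificate is an \<open>LDL\<^sup>T\<close> decomposition of the E7 Gram matrix in which the
  bounded variable is eliminated last.\<close>

lemma e7_norm_eq_2_coeff_bounds:
  assumes norm: "e7_norm x1 x2 x3 x4 x5 x6 x7 = 2"
  shows "x1 < 3" "x2 < 3" "x3 < 4" "x4 < 5" "x5 < 4" "x6 < 3" "x7 < 2"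
proof -
  have "4 * e7_norm x1 x2 x3 x4 x5 x6 x7 = 2*(2*x2 - x4)\<^sup>2 + 2*(2*x3 - x4 - x1)\<^sup>2
      + (2*x4 - 2*x5 - x1)\<^sup>2 + (2*x5 - 2*x6 - x1)\<^sup>2 + (2*x6 - 2*x7 - x1)\<^sup>2 + (2*x7 - x1)\<^sup>2
      + 2 * x1\<^sup>2"
    unfolding e7_norm_def by (simp add: power2_eq_square algebra_simps)
  then show "x1 < 3" by (rule less_of_square_certificate) (simp_all add: norm)
  have "420 * e7_norm x1 x2 x3 x4 x5 x6 x7 = 210*(2*x1 - x3)\<^sup>2 + 70*(3*x3 - 2*x4)\<^sup>2
      + 35*(4*x4 - 3*x5 - 3*x2)\<^sup>2 + 21*(5*x5 - 4*x6 - 3*x2)\<^sup>2 + 14*(6*x6 - 5*x7 - 3*x2)\<^sup>2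
      + 10*(7*x7 - 3*x2)\<^sup>2 + 120 * x2\<^sup>2"
    unfolding e7_norm_def by (simp add: power2_eq_square algebra_simps)
  then show "x2 < 3" by (rule less_of_square_certificate) (simp_all add: norm)
  have "60 * e7_norm x1 x2 x3 x4 x5 x6 x7 = 30*(2*x1 - x3)\<^sup>2 + 30*(2*x2 - x4)\<^sup>2
      + 10*(3*x4 - 2*x5 - 2*x3)\<^sup>2 + 5*(4*x5 - 3*x6 - 2*x3)\<^sup>2 + 3*(5*x6 - 4*x7 - 2*x3)\<^sup>2
      + 8*(3*x7 - x3)\<^sup>2 + 10 * x3\<^sup>2"
    unfolding e7_norm_def by (simp add: power2_eq_square algebra_simps)
  then show "x3 < 4" by (rule less_of_square_certificate) (simp_all add: norm)
  have "12 * e7_norm x1 x2 x3 x4 x5 x6 x7 = 6*(2*x1 - x3)\<^sup>2 + 6*(2*x2 - x4)\<^sup>2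
      + 2*(3*x3 - 2*x4)\<^sup>2 + 6*(2*x5 - x6 - x4)\<^sup>2 + 2*(3*x6 - 2*x7 - x4)\<^sup>2
      + (4*x7 - x4)\<^sup>2 + 1 * x4\<^sup>2"
    unfolding e7_norm_def by (simp add: power2_eq_square algebra_simps)
  then show "x4 < 5" by (rule less_of_square_certificate) (simp_all add: norm)
  have "30 * e7_norm x1 x2 x3 x4 x5 x6 x7 = 15*(2*x1 - x3)\<^sup>2 + 15*(2*x2 - x4)\<^sup>2
      + 5*(3*x3 - 2*x4)\<^sup>2 + (5*x4 - 6*x5)\<^sup>2 + 15*(2*x6 - x7 - x5)\<^sup>2
      + 5*(3*x7 - x5)\<^sup>2 + 4 * x5\<^sup>2"
    unfolding e7_norm_def by (simp add: power2_eq_square algebra_simps)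
  then show "x5 < 4" by (rule less_of_square_certificate) (simp_all add: norm)
  have "60 * e7_norm x1 x2 x3 x4 x5 x6 x7 = 30*(2*x1 - x3)\<^sup>2 + 30*(2*x2 - x4)\<^sup>2
      + 10*(3*x3 - 2*x4)\<^sup>2 + 2*(5*x4 - 6*x5)\<^sup>2 + 3*(4*x5 - 5*x6)\<^sup>2
      + 30*(2*x7 - x6)\<^sup>2 + 15 * x6\<^sup>2"
    unfolding e7_norm_def by (simp add: power2_eq_square algebra_simps)
  then show "x6 < 3" by (rule less_of_square_certificate) (simp_all add: norm)
  have "60 * e7_norm x1 x2 x3 x4 x5 x6 x7 = 30*(2*x1 - x3)\<^sup>2 + 30*(2*x2 - x4)\<^sup>2
      + 10*(3*x3 - 2*x4)\<^sup>2 + 2*(5*x4 - 6*x5)\<^sup>2 + 3*(4*x5 - 5*x6)\<^sup>2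
      + 5*(3*x6 - 4*x7)\<^sup>2 + 40 * x7\<^sup>2"
    unfolding e7_norm_def by (simp add: power2_eq_square algebra_simps)
  then show "x7 < 2" by (rule less_of_square_certificate) (simp_all add: norm)
qed

definition alpha7_roots :: "int list list" where
  "alpha7_roots =
    [[0,0,0,0,0,0,1], [0,0,0,0,0,1,1], [0,0,0,0,1,1,1], [0,0,0,1,1,1,1], [0,0,1,1,1,1,1],
     [0,1,0,1,1,1,1], [0,1,1,1,1,1,1], [0,1,1,2,1,1,1], [0,1,1,2,2,1,1], [0,1,1,2,2,2,1],
     [1,0,1,1,1,1,1], [1,1,1,1,1,1,1], [1,1,1,2,1,1,1], [1,1,1,2,2,1,1], [1,1,1,2,2,2,1],
     [1,1,2,2,1,1,1], [1,1,2,2,2,1,1], [1,1,2,2,2,2,1], [1,1,2,3,2,1,1], [1,1,2,3,2,2,1],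
     [1,1,2,3,3,2,1], [1,2,2,3,2,1,1], [1,2,2,3,2,2,1], [1,2,2,3,3,2,1], [1,2,2,4,3,2,1],
     [1,2,3,4,3,2,1], [2,2,3,4,3,2,1]]"

lemma e7_norm_eq_2_in_alpha7_roots:
  "\<forall>x1\<in>{0,1,2}. \<forall>x2\<in>{0,1,2}. \<forall>x3\<in>{0,1,2,3}. \<forall>x4\<in>{0,1,2,3,4}.
   \<forall>x5\<in>{0,1,2,3}. \<forall>x6\<in>{0,1,2}.
     e7_norm x1 x2 x3 x4 x5 x6 1 = 2 \<longrightarrow> [x1,x2,x3,x4,x5,x6,1] \<in> set alpha7_roots"
  by (simp add: e7_norm_def alpha7_roots_def)

definition of_coeffs :: "int list \<Rightarrow> nat \<Rightarrow> int" where
  "of_coeffs xs i = (if i \<in> {1..7} then xs ! (i - 1) else 0)"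

lemma of_coeffs_coeffs:
  assumes "\<beta> \<in> lattice"
  shows "of_coeffs [\<beta> 1, \<beta> 2, \<beta> 3, \<beta> 4, \<beta> 5, \<beta> 6, \<beta> 7] = \<beta>"
proof
  fix i :: nat
  have "i \<in> {1..7} \<longleftrightarrow> i \<in> {1,2,3,4,5,6,7}" by auto
  then show "of_coeffs [\<beta> 1, \<beta> 2, \<beta> 3, \<beta> 4, \<beta> 5, \<beta> 6, \<beta> 7] i = \<beta> i"
    using assms unfolding of_coeffs_def lattice_def by auto
qed

lemma Delta7pos_coeffs_in_alpha7_roots:
  assumes "\<beta> \<in> Delta7pos"
  shows "[\<beta> 1, \<beta> 2, \<beta> 3, \<beta> 4, \<beta> 5, \<beta> 6, \<beta> 7] \<in> set alpha7_roots"
proof -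
  have norm: "e7_norm (\<beta> 1) (\<beta> 2) (\<beta> 3) (\<beta> 4) (\<beta> 5) (\<beta> 6) (\<beta> 7) = 2"
    and nonneg: "\<And>i. 0 \<le> \<beta> i" and "\<beta> 7 \<noteq> 0"
    using assms form_diag_eq_e7_norm[of \<beta>] unfolding Delta7pos_def E7pos_def E7roots_def by auto
  note bounds = e7_norm_eq_2_coeff_bounds[OF norm]
  have "\<beta> 1 \<in> {0,1,2}" "\<beta> 2 \<in> {0,1,2}" "\<beta> 3 \<in> {0,1,2,3}" "\<beta> 4 \<in> {0,1,2,3,4}"
    "\<beta> 5 \<in> {0,1,2,3}" "\<beta> 6 \<in> {0,1,2}" and "\<beta> 7 = 1"
    using bounds nonneg[of 1] nonneg[of 2] nonneg[of 3] nonneg[of 4] nonneg[of 5] nonneg[of 6]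
      nonneg[of 7] \<open>\<beta> 7 \<noteq> 0\<close> by auto
  then show ?thesis using e7_norm_eq_2_in_alpha7_roots[rule_format] norm by simp
qed

lemma of_coeffs_in_Delta7pos:
  assumes "length xs = 7" and "\<forall>x\<in>set xs. 0 \<le> x"
    and "e7_norm (xs!0) (xs!1) (xs!2) (xs!3) (xs!4) (xs!5) (xs!6) = 2" and "xs!6 \<noteq> 0"
  shows "of_coeffs xs \<in> Delta7pos"
proof -
  have "form (of_coeffs xs) (of_coeffs xs) = 2"
    using assms(3) by (simp add: form_diag_eq_e7_norm of_coeffs_def)
  moreover have "0 \<le> of_coeffs xs i" for i
    using assms(1,2) by (auto simp: of_coeffs_def)
  ultimately show ?thesis
    using assms(4) unfolding Delta7pos_def E7pos_def E7roots_def lattice_def of_coeffs_def by auto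
qed

lemma Delta7pos_eq: "Delta7pos = of_coeffs ` set alpha7_roots"
proof
  show "Delta7pos \<subseteq> of_coeffs ` set alpha7_roots"
  proof
    fix \<beta> assume "\<beta> \<in> Delta7pos"
    then have "\<beta> \<in> lattice" unfolding Delta7pos_def E7pos_def E7roots_def by simp
    then show "\<beta> \<in> of_coeffs ` set alpha7_roots"
      using Delta7pos_coeffs_in_alpha7_roots[OF \<open>\<beta> \<in> Delta7pos\<close>] of_coeffs_coeffs by (metis imageI)
  qed
  show "of_coeffs ` set alpha7_roots \<subseteq> Delta7pos"
    by (auto intro!: of_coeffs_in_Delta7pos simp: alpha7_roots_def e7_norm_def)
qed

lemma fhom_of_coeffs:
  "fhom (of_coeffs [a1, a2, a3, a4, a5, a6, a7]) =
     foldr vadd [vscale a1 (1,0,0), vscale a2 (0,3,0), vscale a3 (3,0,0), vscale a4 (1,1,1),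
       vscale a5 (0,0,3), vscale a6 (0,0,1), vscale a7 (0,3,3)] (0,0,0)"
  by (simp add: fhom_def of_coeffs_def upt_rec fsimple_def)

lemma fhom_alpha7_roots:
  "fhom ` of_coeffs ` set alpha7_roots = {(a,b,c). (a,b,c) \<in> Vset \<and>
     ((a = 0 \<and> b \<noteq> 0 \<and> c \<noteq> 0) \<or> (a \<noteq> 0 \<and> b = 0 \<and> c \<noteq> 0) \<or> (a \<noteq> 0 \<and> b \<noteq> 0 \<and> c = 0))}"
    (is "?\<Gamma> = {(a,b,c). (a,b,c) \<in> Vset \<and> ?one_zero a b c}")
proof (rule set_eqI)
  have in_Vset: "?\<Gamma> \<subseteq> Vset"
    by (simp add: alpha7_roots_def fhom_of_coeffs vadd_def vscale_def Vset_def Fset_def)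
  have enum: "\<forall>a\<in>Fset. \<forall>b\<in>Fset. \<forall>c\<in>Fset. (a,b,c) \<in> ?\<Gamma> \<longleftrightarrow> ?one_zero a b c"
    by (simp add: alpha7_roots_def fhom_of_coeffs vadd_def vscale_def Fset_def)
  have classify: "(a,b,c) \<in> ?\<Gamma> \<longleftrightarrow> ?one_zero a b c" if "(a,b,c) \<in> Vset" for a b c
  proof -
    from that have "a \<in> Fset" "b \<in> Fset" "c \<in> Fset" unfolding Vset_def by auto
    then show ?thesis by (rule enum[rule_format])
  qed
  fix x :: vecV
  obtain a b c where x: "x = (a,b,c)" by (cases x)
  show "x \<in> ?\<Gamma> \<longleftrightarrow> x \<in> {(a,b,c). (a,b,c) \<in> Vset \<and> ?one_zero a b c}"
    using classify[of a b c] in_Vset unfolding x by blast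
qed

theorem mainTheorem6:
  shows "Gamma7pos = {(a,b,c). (a,b,c) \<in> Vset \<and>
           ((a = 0 \<and> b \<noteq> 0 \<and> c \<noteq> 0) \<or>
            (a \<noteq> 0 \<and> b = 0 \<and> c \<noteq> 0) \<or>
            (a \<noteq> 0 \<and> b \<noteq> 0 \<and> c = 0))}"
  unfolding Gamma7pos_def Delta7pos_eq by (rule fhom_alpha7_roots)

end
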